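(* Let $P=\{S_1,\ldots,S_n\}$ be a homothetic packing of $n$ squares. Then the graphs $([n],E_x)$ and $([n],E_y)$ are triangle-free.
   Context: Let $S=\{(x,y): -1\le x,y\le 1\}$. A homothetic packing of $n$ squares is a set $P=\{S_1,\ldots,S_n\}$ with $S_i=r_iS+p_i$, $r_i>0$, $p_i=(x_i,y_i)\in\mathbb{R}^2$, such that distinct squares have disjoint interiors. Its contact graph is $G=([n],E)$ where $\{i,j\}\in E$ iff $i\neq j$ and $S_i\cap S_j\ne\emptyset$. $E_x\subseteq E$ is the set of pairs $\{i,j\}$ with $r_i+r_j=|x_i-x_j|\ge|y_i-y_j|$ ($x$-direction contacts), and $E_y\subseteq E$ the set of pairs with $r_i+r_j=|y_i-y_j|\ge|x_i-x_j|$ ($y$-direction contacts); $E=E_x\cup E_y$. *)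

theory Defs
  imports "HOL-Analysis.Analysis"
begin

text \<open>Square S_i = r_i S + p_i with S = [-1,1]^2, represented by centre (x i, y i)
  and radius r i, for indices i < n (standing for [n]).\<close>

definition square :: "real \<Rightarrow> real \<Rightarrow> real \<Rightarrow> (real \<times> real) set" where
  "square r cx cy = {(u, v). \<bar>u - cx\<bar> \<le> r \<and> \<bar>v - cy\<bar> \<le> r}"

definition homothetic_packing ::
  "nat \<Rightarrow> (nat \<Rightarrow> real) \<Rightarrow> (nat \<Rightarrow> real) \<Rightarrow> (nat \<Rightarrow> real) \<Rightarrow> bool" where
  "homothetic_packing n r x y \<longleftrightarrow>
     (\<forall>i<n. r i > 0) \<and>
     (\<forall>i<n. \<forall>j<n. i \<noteq> j \<longrightarrow>
        interior (square (r i) (x i) (y i)) \<inter> interior (square (r j) (x j) (y j)) = {})"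

definition Ex_contact ::
  "(nat \<Rightarrow> real) \<Rightarrow> (nat \<Rightarrow> real) \<Rightarrow> (nat \<Rightarrow> real) \<Rightarrow> nat \<Rightarrow> nat \<Rightarrow> bool" where
  "Ex_contact r x y i j \<longleftrightarrow> i \<noteq> j \<and>
     r i + r j = \<bar>x i - x j\<bar> \<and> \<bar>x i - x j\<bar> \<ge> \<bar>y i - y j\<bar>"

definition Ey_contact ::
  "(nat \<Rightarrow> real) \<Rightarrow> (nat \<Rightarrow> real) \<Rightarrow> (nat \<Rightarrow> real) \<Rightarrow> nat \<Rightarrow> nat \<Rightarrow> bool" where
  "Ey_contact r x y i j \<longleftrightarrow> i \<noteq> j \<and>
     r i + r j = \<bar>y i - y j\<bar> \<and> \<bar>y i - y j\<bar> \<ge> \<bar>x i - x j\<bar>"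

definition triangle_free :: "nat \<Rightarrow> (nat \<Rightarrow> nat \<Rightarrow> bool) \<Rightarrow> bool" where
  "triangle_free n E \<longleftrightarrow>
     \<not> (\<exists>i<n. \<exists>j<n. \<exists>k<n. i \<noteq> j \<and> j \<noteq> k \<and> i \<noteq> k \<and> E i j \<and> E j k \<and> E i k)"

end

theory Submission
  imports Defs
begin

text \<open>For three pairwise x-contacts, order the centres so that x_j lies
  between x_i and x_k. Then |x_i - x_k| = |x_i - x_j| + |x_j - x_k| = r_i + 2 r_j + r_k,
  which exceeds r_i + r_k.\<close>

lemma no_three_touching_intervals:
  fixes a b c ra rb rc :: real
  assumes "ra > 0" "rb > 0" "rc > 0"
    and "ra + rb = \<bar>a - b\<bar>" "rb + rc = \<bar>b - c\<bar>" "ra + rc = \<bar>a - c\<bar>"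
  shows False
  using assms by linarith

lemma triangle_free_if_touching_along_line:
  fixes r c :: "nat \<Rightarrow> real" and E :: "nat \<Rightarrow> nat \<Rightarrow> bool"
  assumes pos: "\<And>i. i < n \<Longrightarrow> r i > 0"
    and touch: "\<And>i j. E i j \<Longrightarrow> r i + r j = \<bar>c i - c j\<bar>"
  shows "triangle_free n E"
  unfolding triangle_free_def
proof (intro notI, elim exE conjE)
  fix i j k
  assume "i < n" "j < n" "k < n" "E i j" "E j k" "E i k"
  then show False
    using no_three_touching_intervals[of "r i" "r j" "r k" "c i" "c j" "c k"] pos touch
    by blast
qed

theorem lemma5:
  fixes n :: nat and r x y :: "nat \<Rightarrow> real"
  assumes "homothetic_packing n r x y"
  shows "triangle_free n (Ex_contact r x y) \<and> triangle_free n (Ey_contact r x y)"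
proof -
  have pos: "\<And>i. i < n \<Longrightarrow> r i > 0"
    using assms by (simp add: homothetic_packing_def)
  show ?thesis
  proof
    show "triangle_free n (Ex_contact r x y)"
      by (rule triangle_free_if_touching_along_line[where c = x]) (auto simp: pos Ex_contact_def)
    show "triangle_free n (Ey_contact r x y)"
      by (rule triangle_free_if_touching_along_line[where c = y]) (auto simp: pos Ey_contact_def)
  qed
qed

end
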